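(* Let $(X,d)$ be a separable metric space, $f:X\to X$ a Borel measurable map, and $A\subset X$ a Borel set such that $f$ is Lyapunov stable on $A$. Then $\mu(A)=0$ for every Borel probability measure $\mu$ that is an expansive measure of $f$.
   Context: $f$ is Lyapunov stable on $A$ if for every $x\in A$ and every $\epsilon>0$ there is a neighborhood $U(x)$ of $x$ such that $d(f^n(x),f^n(y))<\epsilon$ for all $n\ge0$ and all $y\in U(x)\cap A$. A Borel probability measure $\mu$ (not necessarily invariant) is an expansive measure of $f$ if there is $\delta>0$ with $\mu(\Phi_\delta(x))=0$ for all $x\in X$, where $\Phi_\delta(x)=\{y\in X: d(f^i(y),f^i(x))\le\delta \text{ for all } i\in\mathbb{N}\}$, $\mathbb{N}=\{0,1,2,\dots\}$. *)

theory Defs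
  imports "HOL-Analysis.Analysis" "HOL-Probability.Probability"
begin

definition lyapunov_stable_on :: "('a::metric_space \<Rightarrow> 'a) \<Rightarrow> 'a set \<Rightarrow> bool" where
  "lyapunov_stable_on f A \<longleftrightarrow>
     (\<forall>x\<in>A. \<forall>\<epsilon>>0. \<exists>U. open U \<and> x \<in> U \<and>
        (\<forall>n. \<forall>y\<in>U \<inter> A. dist ((f ^^ n) x) ((f ^^ n) y) < \<epsilon>))"

definition dyn_ball :: "('a::metric_space \<Rightarrow> 'a) \<Rightarrow> real \<Rightarrow> 'a \<Rightarrow> 'a set" where
  "dyn_ball f \<delta> x = {y. \<forall>i::nat. dist ((f ^^ i) y) ((f ^^ i) x) \<le> \<delta>}"

definition expansive_measure :: "('a::metric_space \<Rightarrow> 'a) \<Rightarrow> 'a measure \<Rightarrow> bool" where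
  "expansive_measure f \<mu> \<longleftrightarrow> (\<exists>\<delta>>0. \<forall>x. emeasure \<mu> (dyn_ball f \<delta> x) = 0)"

end

theory Submission
  imports Defs
begin

text \<open>Lyapunov stability puts a relative neighbourhood of each x \<in> A inside the dynamical
  ball of x, which is null for an expansive measure. So A is locally null; as the balls with
  centres in a countable dense set and rational radii form a countable base, A is then a
  countable union of null sets.\<close>

lemma measurable_funpow:
  assumes "f \<in> M \<rightarrow>\<^sub>M M"
  shows "f ^^ n \<in> M \<rightarrow>\<^sub>M M"
proof (induction n)
  case (Suc n)
  then show ?case
    using measurable_comp[OF Suc assms] by (simp add: comp_def)
qed simp

lemma sets_dyn_ball:
  assumes "f \<in> borel_measurable (borel :: 'a::metric_space measure)"
  shows "dyn_ball f \<delta> x \<in> sets borel"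
proof -
  have "(\<lambda>y. dist ((f ^^ i) y) ((f ^^ i) x)) \<in> borel_measurable borel" for i
  proof -
    have "(\<lambda>z. dist z ((f ^^ i) x)) \<in> borel_measurable borel"
      by (intro borel_measurable_continuous_onI continuous_intros)
    then show ?thesis
      by (rule measurable_compose[OF measurable_funpow[OF assms]])
  qed
  moreover have "dyn_ball f \<delta> x = (\<Inter>i. {y. dist ((f ^^ i) y) ((f ^^ i) x) \<le> \<delta>})"
    unfolding dyn_ball_def by auto
  ultimately show ?thesis
    by simp
qed

lemma lyapunov_stable_on_imp_dyn_ball_nhd:
  assumes "lyapunov_stable_on f A" "x \<in> A" "\<delta> > 0"
  obtains U where "open U" "x \<in> U" "U \<inter> A \<subseteq> dyn_ball f \<delta> x"
proof -
  obtain U where "open U" "x \<in> U" and close: "\<forall>n. \<forall>y\<in>U \<inter> A. dist ((f ^^ n) x) ((f ^^ n) y) < \<delta>"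
    using assms unfolding lyapunov_stable_on_def by blast
  have "U \<inter> A \<subseteq> dyn_ball f \<delta> x"
    using close by (auto simp: dyn_ball_def dist_commute less_imp_le)
  with \<open>open U\<close> \<open>x \<in> U\<close> show ?thesis
    using that by blast
qed

lemma dense_rational_ball_inside_open:
  fixes C :: "'a::metric_space set"
  assumes "closure C = UNIV" "open U" "x \<in> U"
  obtains c q where "c \<in> C" "q \<in> \<rat>" "x \<in> ball c q" "ball c q \<subseteq> U"
proof -
  obtain r where "r > 0" "ball x r \<subseteq> U"
    using assms(2,3) open_contains_ball by blast
  obtain c where "c \<in> C" "dist c x < r/2"
    using closure_approachable[of x C] assms(1) \<open>r > 0\<close> by (metis UNIV_I half_gt_zero)
  then obtain q where "q \<in> \<rat>" "dist c x < q" "q < r/2"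
    using Rats_dense_in_real by blast
  have "ball c q \<subseteq> ball x r"
  proof
    fix y assume "y \<in> ball c q"
    moreover have "dist x y \<le> dist c x + dist c y"
      by (rule dist_triangle3)
    ultimately show "y \<in> ball x r"
      using \<open>dist c x < q\<close> \<open>q < r/2\<close> by simp
  qed
  with \<open>c \<in> C\<close> \<open>q \<in> \<rat>\<close> \<open>dist c x < q\<close> \<open>ball x r \<subseteq> U\<close> show ?thesis
    using that by auto
qed

lemma null_sets_if_locally_null:
  fixes A :: "'a::metric_space set"
  assumes "separable_space (euclidean :: 'a topology)" "sets M = sets borel" "A \<in> sets borel"
    and local_null: "\<And>x. x \<in> A \<Longrightarrow> \<exists>U. open U \<and> x \<in> U \<and> U \<inter> A \<in> null_sets M"
  shows "A \<in> null_sets M"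
proof -
  obtain C :: "'a set" where "countable C" "closure C = UNIV"
    using assms(1) by (auto simp: separable_space_def euclidean_closure_of)
  define G where "G = {(c, q) \<in> C \<times> \<rat>. ball c q \<inter> A \<in> null_sets M}"
  have "countable G"
    using \<open>countable C\<close> countable_rat
    by (auto simp: G_def intro: countable_subset[of _ "C \<times> \<rat>"])
  moreover have "(\<lambda>(c, q). ball c q \<inter> A) p \<in> null_sets M" if "p \<in> G" for p
    using that by (auto simp: G_def)
  ultimately have "(\<Union>(c, q)\<in>G. ball c q \<inter> A) \<in> null_sets M"
    by (intro null_sets_UN') auto
  moreover have "A \<subseteq> (\<Union>(c, q)\<in>G. ball c q \<inter> A)"
  proof
    fix x assume "x \<in> A"
    then obtain U where "open U" "x \<in> U" "U \<inter> A \<in> null_sets M"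
      using local_null by blast
    then obtain c q where "c \<in> C" "q \<in> \<rat>" "x \<in> ball c q" "ball c q \<subseteq> U"
      using dense_rational_ball_inside_open[OF \<open>closure C = UNIV\<close>] by metis
    moreover have "ball c q \<inter> A \<in> null_sets M"
      using null_sets_subset[OF \<open>U \<inter> A \<in> null_sets M\<close>] \<open>ball c q \<subseteq> U\<close> assms(2,3)
      by (metis Int_mono borel_open open_ball order_refl sets.Int)
    ultimately show "x \<in> (\<Union>(c, q)\<in>G. ball c q \<inter> A)"
      using \<open>x \<in> A\<close> by (auto simp: G_def)
  qed
  ultimately show ?thesis
    using null_sets_subset assms(2,3) by blast
qed

theorem proposition3p4:
  fixes f :: "'a::metric_space \<Rightarrow> 'a" and A :: "'a set"
  assumes "separable_space (euclidean :: 'a topology)"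
    and "f \<in> borel_measurable borel"
    and "A \<in> sets borel"
    and "lyapunov_stable_on f A"
  shows "\<forall>\<mu>::'a measure. sets \<mu> = sets borel \<and> prob_space \<mu> \<and> expansive_measure f \<mu>
           \<longrightarrow> emeasure \<mu> A = 0"
proof (intro allI impI)
  fix \<mu> :: "'a measure"
  assume "sets \<mu> = sets borel \<and> prob_space \<mu> \<and> expansive_measure f \<mu>"
  then have sets_\<mu>: "sets \<mu> = sets borel" and "expansive_measure f \<mu>"
    by auto
  then obtain \<delta> where "\<delta> > 0" and null_ball: "\<And>x. emeasure \<mu> (dyn_ball f \<delta> x) = 0"
    unfolding expansive_measure_def by auto
  have "\<exists>U. open U \<and> x \<in> U \<and> U \<inter> A \<in> null_sets \<mu>" if "x \<in> A" for x
  proof -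
    obtain U where "open U" "x \<in> U" "U \<inter> A \<subseteq> dyn_ball f \<delta> x"
      using lyapunov_stable_on_imp_dyn_ball_nhd[OF assms(4) \<open>x \<in> A\<close> \<open>\<delta> > 0\<close>] .
    moreover have "dyn_ball f \<delta> x \<in> null_sets \<mu>"
      using null_ball sets_dyn_ball[OF assms(2)] sets_\<mu> by (simp add: null_sets_def)
    ultimately show ?thesis
      using null_sets_subset sets_\<mu> assms(3) borel_open by (metis sets.Int)
  qed
  then have "A \<in> null_sets \<mu>"
    using null_sets_if_locally_null[OF assms(1) sets_\<mu> assms(3)] by blast
  then show "emeasure \<mu> A = 0"
    by auto
qed

end
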